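(* If the alphabet $\mathcal{A}\subset\mathbb{N}$ contains $1$ and $2$, then the semigroup $\Gamma_{\mathcal{A}}$ has everywhere strong approximation.
   Context: For $a\in\mathbb{N}$ let $\gamma_a=\begin{pmatrix}0&1\\1&a\end{pmatrix}$. $\Gamma_{\mathcal{A}}\subset\mathrm{SL}_2(\mathbb{Z})$ is the semigroup generated by the products $\gamma_a\gamma_{a'}$, $a,a'\in\mathcal{A}$. $\Gamma_{\mathcal{A}}$ has everywhere strong approximation if for every $q\in\mathbb{N}$ the reduction of $\Gamma_{\mathcal{A}}$ modulo $q$ equals $\mathrm{SL}_2(\mathbb{Z}/q\mathbb{Z})$. *)

theory Defs
  imports Main
begin

type_synonym mat2 = "int \<times> int \<times> int \<times> int"

fun mmul :: "mat2 \<Rightarrow> mat2 \<Rightarrow> mat2" where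
  "mmul (a, b, c, d) (a', b', c', d') =
     (a * a' + b * c', a * b' + b * d', c * a' + d * c', c * b' + d * d')"

fun mdet :: "mat2 \<Rightarrow> int" where
  "mdet (a, b, c, d) = a * d - b * c"

definition gamma :: "nat \<Rightarrow> mat2" where
  "gamma a = (0, 1, 1, int a)"

inductive_set Gamma_semigroup :: "nat set \<Rightarrow> mat2 set" for A :: "nat set" where
  gen: "a \<in> A \<Longrightarrow> a' \<in> A \<Longrightarrow> mmul (gamma a) (gamma a') \<in> Gamma_semigroup A"
| mult: "g \<in> Gamma_semigroup A \<Longrightarrow> h \<in> Gamma_semigroup A \<Longrightarrow> mmul g h \<in> Gamma_semigroup A"

fun mcong :: "mat2 \<Rightarrow> mat2 \<Rightarrow> int \<Rightarrow> bool" where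
  "mcong (a, b, c, d) (a', b', c', d') q \<longleftrightarrow>
     a mod q = a' mod q \<and> b mod q = b' mod q \<and> c mod q = c' mod q \<and> d mod q = d' mod q"

text \<open>Reduction of S modulo q equals SL_2(Z/qZ): every element of S has determinant 1
  (hence reduces into SL_2), and every integer matrix whose determinant is 1 mod q
  (i.e. every element of SL_2(Z/qZ), via its entrywise lifts) is congruent mod q to
  an element of S.\<close>
definition everywhere_strong_approx :: "mat2 set \<Rightarrow> bool" where
  "everywhere_strong_approx S \<longleftrightarrow>
     (\<forall>q::nat. q \<ge> 1 \<longrightarrow>
        (\<forall>M. mdet M mod int q = 1 mod int q \<longrightarrow> (\<exists>g\<in>S. mcong g M (int q))))"

end

theory Submission
  imports Defs
begin

text \<open>Let \<open>g = \<gamma>(1) \<gamma>(1)\<close>. Modulo \<open>q\<close> it has some finite order \<open>N\<close>, so the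
  semigroup element \<open>P = g^(2N-1)\<close> reduces to the inverse of \<open>g\<close>. Since
  \<open>\<gamma>(1) \<gamma>(2) = g U\<close> and \<open>\<gamma>(2) \<gamma>(1) = L g\<close> for the elementary unipotents \<open>U\<close>, \<open>L\<close>,
  the semigroup contains reductions of \<open>U\<close> and \<open>L\<close>, and their positive powers give
  every unipotent matrix mod \<open>q\<close>. Finally every matrix of determinant \<open>1\<close> mod \<open>q\<close> is
  congruent to a product of unipotents: row reduction by the Euclidean algorithm
  makes it upper triangular, and an upper triangular matrix with diagonal product
  \<open>1\<close> mod \<open>q\<close> has an explicit such lift.\<close>

lemma mmul_assoc: "mmul (mmul X Y) Z = mmul X (mmul Y Z)"
  by (cases X; cases Y; cases Z) (simp add: algebra_simps)

lemma mmul_one_left [simp]: "mmul (1,0,0,1) X = X"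
  by (cases X) simp

lemma mmul_one_right [simp]: "mmul X (1,0,0,1) = X"
  by (cases X) simp

lemma mdet_mmul: "mdet (mmul X Y) = mdet X * mdet Y"
  by (cases X; cases Y) (simp add: algebra_simps)

fun adj :: "mat2 \<Rightarrow> mat2" where
  "adj (a, b, c, d) = (d, -b, -c, a)"

lemma adj_mmul: "adj (mmul X Y) = mmul (adj Y) (adj X)"
  by (cases X; cases Y) (simp add: algebra_simps)

lemma mmul_adj_left: "mdet X = 1 \<Longrightarrow> mmul (adj X) X = (1,0,0,1)"
  by (cases X) (simp add: algebra_simps)

lemma mcong_refl [simp]: "mcong X X q"
  by (cases X) simp

lemma mcong_sym: "mcong X Y q \<Longrightarrow> mcong Y X q"
  by (cases X; cases Y) simp

lemma mcong_trans: "mcong X Y q \<Longrightarrow> mcong Y Z q \<Longrightarrow> mcong X Z q"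
  by (cases X; cases Y; cases Z) simp

lemma mcong_iff_dvd:
  "mcong (a, b, c, d) (a', b', c', d') q \<longleftrightarrow>
     q dvd a - a' \<and> q dvd b - b' \<and> q dvd c - c' \<and> q dvd d - d'"
  by (simp add: mod_eq_dvd_iff)

lemma mcong_mmul: "mcong X X' q \<Longrightarrow> mcong Y Y' q \<Longrightarrow> mcong (mmul X Y) (mmul X' Y') q"
  by (cases X; cases Y; cases X'; cases Y') (auto intro!: mod_add_cong mod_mult_cong)

lemma mcong_cancel_left:
  assumes "mdet g = 1" "mcong (mmul g X) (mmul g Y) q"
  shows "mcong X Y q"
proof -
  have "mcong (mmul (adj g) (mmul g X)) (mmul (adj g) (mmul g Y)) q"
    using assms(2) by (rule mcong_mmul[OF mcong_refl])
  then show ?thesis by (simp add: mmul_assoc[symmetric] mmul_adj_left[OF assms(1)])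
qed

fun red :: "int \<Rightarrow> mat2 \<Rightarrow> mat2" where
  "red q (a, b, c, d) = (a mod q, b mod q, c mod q, d mod q)"

lemma mcong_iff_red_eq: "mcong X Y q \<longleftrightarrow> red q X = red q Y"
  by (cases X; cases Y) simp

lemma finite_range_red: "q > 0 \<Longrightarrow> finite (range (red q))"
proof -
  assume "q > 0"
  then have "range (red q) \<subseteq> {0..<q} \<times> {0..<q} \<times> {0..<q} \<times> {0..<q}"
    by (auto elim!: red.elims)
  then show ?thesis by (rule finite_subset) auto
qed

fun mpow :: "mat2 \<Rightarrow> nat \<Rightarrow> mat2" where
  "mpow g 0 = (1,0,0,1)"
| "mpow g (Suc n) = mmul g (mpow g n)"

lemma mpow_add: "mpow g (m + n) = mmul (mpow g m) (mpow g n)"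
  by (induction m) (auto simp: mmul_assoc)

lemma mpow_Suc_right: "mpow g (Suc n) = mmul (mpow g n) g"
  using mpow_add[of g n 1] by simp

lemma mcong_mpow: "mcong g E q \<Longrightarrow> mcong (mpow g n) (mpow E n) q"
  by (induction n) (auto intro: mcong_mmul)

lemma mpow_upper_unipotent: "mpow (1,1,0,1) n = (1, int n, 0, 1)"
  by (induction n) auto

lemma mpow_lower_unipotent: "mpow (1,0,1,1) n = (1, 0, int n, 1)"
  by (induction n) auto

lemma mcong_mpow_cancel:
  assumes "mdet g = 1" "mcong (mpow g j) (mpow g (j + d)) q"
  shows "mcong (mpow g d) (1,0,0,1) q"
  using assms(2)
proof (induction j)
  case 0
  then show ?case by (simp add: mcong_sym)
next
  case (Suc j)
  then show ?case
    using mcong_cancel_left[OF assms(1)] by (simp add: mmul_assoc)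
qed

lemma mdet_one_imp_mpow_cong_one:
  assumes "mdet g = 1" "q > 0"
  obtains N where "N \<ge> 1" "mcong (mpow g N) (1,0,0,1) q"
proof -
  have "finite (range (red q \<circ> mpow g))"
    by (rule finite_subset[OF _ finite_range_red[OF assms(2)]]) auto
  then have "\<not> inj (red q \<circ> mpow g)"
    using finite_imageD by fastforce
  then obtain i j where "i < j" "red q (mpow g i) = red q (mpow g j)"
    unfolding inj_def by (metis comp_apply linorder_neqE_nat)
  then have "mcong (mpow g i) (mpow g (i + (j - i))) q"
    by (simp add: mcong_iff_red_eq)
  then have "mcong (mpow g (j - i)) (1,0,0,1) q"
    by (rule mcong_mpow_cancel[OF assms(1)])
  with \<open>i < j\<close> show thesis
    by (intro that[of "j - i"]) simp_all
qed

inductive_set EL :: "mat2 set" where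
  one: "(1,0,0,1) \<in> EL"
| upper: "X \<in> EL \<Longrightarrow> mmul (1,t,0,1) X \<in> EL"
| lower: "X \<in> EL \<Longrightarrow> mmul (1,0,t,1) X \<in> EL"

lemma EL_mmul: "X \<in> EL \<Longrightarrow> Y \<in> EL \<Longrightarrow> mmul X Y \<in> EL"
  by (induction X rule: EL.induct) (auto simp: mmul_assoc intro: EL.intros)

lemma upper_in_EL: "(1,t,0,1) \<in> EL"
  using EL.upper[OF EL.one, of t] by simp

lemma lower_in_EL: "(1,0,t,1) \<in> EL"
  using EL.lower[OF EL.one, of t] by simp

lemma mdet_EL: "X \<in> EL \<Longrightarrow> mdet X = 1"
  by (induction X rule: EL.induct) (auto simp: mdet_mmul)

lemma adj_EL: "X \<in> EL \<Longrightarrow> adj X \<in> EL"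
proof (induction X rule: EL.induct)
  case one
  then show ?case using EL.one by simp
next
  case (upper X t)
  then show ?case using EL_mmul[OF upper.IH upper_in_EL[of "-t"]] by (simp add: adj_mmul)
next
  case (lower X t)
  then show ?case using EL_mmul[OF lower.IH lower_in_EL[of "-t"]] by (simp add: adj_mmul)
qed

lemma EL_reduces_to_upper_triangular: "\<exists>X\<in>EL. \<exists>u b' v. mmul X (a, b, c, d) = (u, b', 0, v)"
proof (induction "nat \<bar>c\<bar>" arbitrary: a b c d rule: less_induct)
  case less
  show ?case
  proof (cases "c = 0")
    case True
    then show ?thesis using EL.one by force
  next
    case False
    define t where "t = a div c"
    define a1 where "a1 = a mod c"
    have "a - t * c = a1"
      unfolding t_def a1_def by (metis minus_div_mult_eq_mod)
    then have step1: "mmul (1,-t,0,1) (a, b, c, d) = (a1, b - t*d, c, d)"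
      by (simp add: algebra_simps)
    show ?thesis
    proof (cases "a1 = 0")
      case True
      let ?X = "mmul (1,0,-1,1) (mmul (1,1,0,1) (1,-t,0,1))"
      have "?X \<in> EL" by (intro EL_mmul upper_in_EL lower_in_EL)
      moreover have "mmul ?X (a, b, c, d) = (c, b - t*d + d, 0, d - (b - t*d + d))"
        using step1 True by (simp add: mmul_assoc algebra_simps)
      ultimately show ?thesis by blast
    next
      case False
      define s where "s = c div a1"
      define c1 where "c1 = c mod a1"
      have "c - s * a1 = c1"
        unfolding s_def c1_def by (metis minus_div_mult_eq_mod)
      then have step2: "mmul (1,0,-s,1) (a1, b - t*d, c, d) = (a1, b - t*d, c1, d - s*(b - t*d))"
        by (simp add: algebra_simps)
      have "\<bar>c1\<bar> < \<bar>a1\<bar>"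
        unfolding c1_def using False abs_mod_less by blast
      moreover have "\<bar>a1\<bar> < \<bar>c\<bar>"
        unfolding a1_def using \<open>c \<noteq> 0\<close> abs_mod_less by blast
      ultimately have "nat \<bar>c1\<bar> < nat \<bar>c\<bar>" by simp
      from less[OF this] obtain X' u b' v where X': "X' \<in> EL"
        "mmul X' (a1, b - t*d, c1, d - s*(b - t*d)) = (u, b', 0, v)" by blast
      let ?X = "mmul X' (mmul (1,0,-s,1) (1,-t,0,1))"
      have "?X \<in> EL" using X'(1) by (intro EL_mmul upper_in_EL lower_in_EL)
      moreover have "mmul ?X (a, b, c, d) = (u, b', 0, v)"
        using step1 step2 X'(2) by (simp only: mmul_assoc)
      ultimately show ?thesis by blast
    qed
  qed
qed

lemma upper_triangular_cong_EL:
  assumes "(u * v) mod q = 1 mod q"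
  shows "\<exists>Y\<in>EL. mcong Y (u, b, 0, v) q"
proof -
  obtain k where k: "u * v - 1 = q * k"
    using assms mod_eq_dvd_iff by blast
  define e where "e = 1 - u * v"
  define s where "s = v * b"
  let ?Y = "mmul (1,u,0,1) (mmul (1,0,-v,1) (mmul (1,u,0,1) (mmul (1,-1,0,1)
             (mmul (1,0,1,1) (mmul (1,-1,0,1) (1,s,0,1))))))"
  have "?Y \<in> EL" by (intro EL_mmul upper_in_EL lower_in_EL)
  moreover have "?Y = (u*(1+e), u*(1+e)*s - e, e, e*s + v)"
    unfolding e_def by (simp add: algebra_simps)
  moreover have "mcong (u*(1+e), u*(1+e)*s - e, e, e*s + v) (u, b, 0, v) q"
  proof -
    have "e = q * -k" using k e_def by simp
    then show ?thesis
      unfolding mcong_iff_dvd s_def using k by (simp add: algebra_simps)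
  qed
  ultimately show ?thesis by metis
qed

lemma mdet_cong_one_imp_cong_EL:
  assumes "mdet M mod q = 1 mod q"
  shows "\<exists>Z\<in>EL. mcong Z M q"
proof -
  obtain X u b' v where X: "X \<in> EL" "mmul X M = (u, b', 0, v)"
    using EL_reduces_to_upper_triangular by (metis mdet.cases)
  have "mdet (mmul X M) = mdet M"
    using mdet_EL[OF X(1)] by (simp add: mdet_mmul)
  then have "(u * v) mod q = 1 mod q" using X(2) assms by simp
  then obtain Y where Y: "Y \<in> EL" "mcong Y (u, b', 0, v) q"
    using upper_triangular_cong_EL by blast
  have "M = mmul (adj X) (mmul X M)"
    by (simp add: mmul_assoc[symmetric] mmul_adj_left[OF mdet_EL[OF X(1)]])
  then have "mcong (mmul (adj X) Y) M q"
    using X(2) mcong_mmul[OF mcong_refl Y(2)] by metis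
  moreover have "mmul (adj X) Y \<in> EL"
    using EL_mmul adj_EL X(1) Y(1) by blast
  ultimately show ?thesis by blast
qed

definition mmul_closed :: "mat2 set \<Rightarrow> bool" where
  "mmul_closed S \<longleftrightarrow> (\<forall>x\<in>S. \<forall>y\<in>S. mmul x y \<in> S)"

lemma mmul_closed_Gamma_semigroup: "mmul_closed (Gamma_semigroup A)"
  unfolding mmul_closed_def by (blast intro: Gamma_semigroup.mult)

lemma mmul_closed_mpow:
  assumes "mmul_closed S" "g \<in> S" "n \<ge> 1"
  shows "mpow g n \<in> S"
  using assms(3)
proof (induction n rule: dec_induct)
  case base
  then show ?case using assms(2) by simp
next
  case (step n)
  then show ?case using assms(1,2) unfolding mmul_closed_def by simp
qed

text \<open>The exponent \<open>2N - 1\<close> rather than \<open>N - 1\<close> keeps it positive: \<open>S\<close> need not contain \<open>1\<close>.\<close>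

lemma mmul_closed_has_inverse_mod:
  assumes "mmul_closed S" "g \<in> S" "mdet g = 1" "q > 0"
  obtains P where "P \<in> S" "mcong (mmul P g) (1,0,0,1) q" "mcong (mmul g P) (1,0,0,1) q"
proof -
  obtain N where N: "N \<ge> 1" "mcong (mpow g N) (1,0,0,1) q"
    using mdet_one_imp_mpow_cong_one[OF assms(3,4)] by blast
  define P where "P = mpow g (2*N - 1)"
  have "P \<in> S" unfolding P_def using mmul_closed_mpow[OF assms(1,2)] N(1) by simp
  have "mpow g (Suc (2*N - 1)) = mmul (mpow g N) (mpow g N)"
    using N(1) mpow_add[of g N N] by (simp add: mult_2)
  then have "mcong (mpow g (Suc (2*N - 1))) (1,0,0,1) q"
    using mcong_mmul[OF N(2) N(2)] by simp
  then show thesis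
    using that[OF \<open>P \<in> S\<close>] mpow_Suc_right[of g "2*N - 1"] unfolding P_def
    by (metis mpow.simps(2))
qed

lemma mmul_closed_covers_unipotents:
  assumes S: "mmul_closed S" and q: "q \<ge> 1"
    and U: "gU \<in> S" "mcong gU (1,1,0,1) (int q)"
    and L: "gL \<in> S" "mcong gL (1,0,1,1) (int q)"
  shows "\<exists>h\<in>S. mcong h (1,t,0,1) (int q)" "\<exists>h\<in>S. mcong h (1,0,t,1) (int q)"
proof -
  define n where "n = nat (t mod int q) + q"
  have "n \<ge> 1" "int n mod int q = t mod int q"
    unfolding n_def using q by simp_all
  then have "mcong (mpow gU n) (1,t,0,1) (int q)" "mcong (mpow gL n) (1,0,t,1) (int q)"
    by (auto intro: mcong_trans[OF mcong_mpow[OF U(2)]] mcong_trans[OF mcong_mpow[OF L(2)]]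
        simp: mpow_upper_unipotent mpow_lower_unipotent)
  moreover have "mpow gU n \<in> S" "mpow gL n \<in> S"
    using mmul_closed_mpow[OF S] U(1) L(1) \<open>n \<ge> 1\<close> by blast+
  ultimately show "\<exists>h\<in>S. mcong h (1,t,0,1) (int q)" "\<exists>h\<in>S. mcong h (1,0,t,1) (int q)"
    by blast+
qed

lemma mmul_closed_covers_EL:
  assumes S: "mmul_closed S"
    and upper: "\<And>t. \<exists>h\<in>S. mcong h (1,t,0,1) q"
    and lower: "\<And>t. \<exists>h\<in>S. mcong h (1,0,t,1) q"
    and "X \<in> EL"
  shows "\<exists>h\<in>S. mcong h X q"
  using \<open>X \<in> EL\<close>
proof (induction X rule: EL.induct)
  case one
  then show ?case using upper[of 0] by simp
next
  case (upper X t)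
  then show ?case
    using assms(2)[of t] S mcong_mmul unfolding mmul_closed_def by blast
next
  case (lower X t)
  then show ?case
    using assms(3)[of t] S mcong_mmul unfolding mmul_closed_def by blast
qed

theorem lemmaB2:
  fixes A :: "nat set"
  assumes "A \<subseteq> {1..}"
    and "1 \<in> A" and "2 \<in> A"
  shows "everywhere_strong_approx (Gamma_semigroup A)"
  unfolding everywhere_strong_approx_def
proof (intro allI impI)
  fix q :: nat and M
  assume q: "q \<ge> 1" and M: "mdet M mod int q = 1 mod int q"
  let ?S = "Gamma_semigroup A"
  have S: "mmul_closed ?S" by (rule mmul_closed_Gamma_semigroup)
  have g11: "(1,1,1,2) \<in> ?S" and g12: "(1,2,1,3) \<in> ?S" and g21: "(1,1,2,3) \<in> ?S"
    using Gamma_semigroup.gen assms(2,3) by (fastforce simp: gamma_def)+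
  obtain P where P: "P \<in> ?S" "mcong (mmul P (1,1,1,2)) (1,0,0,1) (int q)"
    "mcong (mmul (1,1,1,2) P) (1,0,0,1) (int q)"
    by (rule mmul_closed_has_inverse_mod[OF S g11]) (use q in auto)
  have "mcong (mmul P (1,2,1,3)) (1,1,0,1) (int q)"
    using mcong_mmul[OF P(2) mcong_refl, of "(1,1,0,1)"] by (simp add: mmul_assoc)
  moreover have "mcong (mmul (1,1,2,3) P) (1,0,1,1) (int q)"
    using mcong_mmul[OF mcong_refl P(3), of "(1,0,1,1)"] by (simp add: mmul_assoc[symmetric])
  moreover have "mmul P (1,2,1,3) \<in> ?S" "mmul (1,1,2,3) P \<in> ?S"
    using S P(1) g12 g21 unfolding mmul_closed_def by blast+
  ultimately have "\<exists>h\<in>?S. mcong h X (int q)" if "X \<in> EL" for X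
    using mmul_closed_covers_EL[OF S _ _ that] mmul_closed_covers_unipotents[OF S q] by blast
  then show "\<exists>g\<in>?S. mcong g M (int q)"
    using mdet_cong_one_imp_cong_EL[OF M] mcong_trans by blast
qed

end
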